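(* Let $(X,d)$ be a separable metric space, $T\colon X\to X$ Borel measurable, and $\mu$ a $T$-invariant Borel probability measure with Hausdorff dimension $\alpha$. Then $C_\phi\le 1/\alpha$ (with $1/0=\infty$), where \[C_\phi=\sup\big(\{0\}\cup\{s>0:\ \liminf_{n\to\infty}n^s d(T^nx,y)=0 \text{ for }\mu\times\mu\text{-a.e. }(x,y)\}\big).\]
   Context: The Hausdorff dimension of $\mu$ (with respect to $d$) is understood as $\inf\{\dim_H E:\ E \text{ Borel},\ \mu(E)=1\}$, where $\dim_H$ is Hausdorff dimension of sets. *)

theory Defs
  imports "HOL-Probability.Probability"
begin

definition hausdorff_approx :: "real \<Rightarrow> real \<Rightarrow> 'a::metric_space set \<Rightarrow> ennreal" where
  "hausdorff_approx s \<delta> E =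
     (INF U \<in> {U :: nat \<Rightarrow> 'a set. E \<subseteq> (\<Union>i. U i) \<and>
                 (\<forall>i. bounded (U i) \<and> diameter (U i) \<le> \<delta>)}.
        (\<Sum>i. ennreal (diameter (U i) powr s)))"

definition hausdorff_measure :: "real \<Rightarrow> 'a::metric_space set \<Rightarrow> ennreal" where
  "hausdorff_measure s E = (SUP \<delta> \<in> {0<..}. hausdorff_approx s \<delta> E)"

text \<open>Hausdorff dimension of a set: inf of s > 0 with H^s(E) = 0 (inf of the empty set is infinity).\<close>
definition hausdorff_dim :: "'a::metric_space set \<Rightarrow> ereal" where
  "hausdorff_dim E = (INF s \<in> {s::real. s > 0 \<and> hausdorff_measure s E = 0}. ereal s)"

definition measure_hausdorff_dim :: "'a::metric_space measure \<Rightarrow> ereal" where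
  "measure_hausdorff_dim M =
     (INF E \<in> {E. E \<in> sets borel \<and> emeasure M E = 1}. hausdorff_dim E)"

definition C_phi :: "'a::metric_space measure \<Rightarrow> ('a \<Rightarrow> 'a) \<Rightarrow> ereal" where
  "C_phi M T = Sup ({0} \<union> {ereal s | s. s > 0 \<and>
      (AE z in M \<Otimes>\<^sub>M M.
         liminf (\<lambda>n. ereal (real n powr s * dist ((T ^^ n) (fst z)) (snd z))) = 0)})"

end

theory Submission
  imports Defs
begin

text \<open>Pick a \<open>\<mu>\<close>-typical \<open>x\<close>. For \<open>\<mu>\<close>-a.e. \<open>y\<close> the orbit of \<open>x\<close> comes \<open>n\<^sup>-\<^sup>s\<close>-close to \<open>y\<close>
  infinitely often, so the limsup set \<open>E\<close> of the balls \<open>B(T\<^sup>n x, n\<^sup>-\<^sup>s)\<close> has full measure. Its tails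
  are covers whose \<open>t\<close>-dimensional cost is a tail of \<open>\<Sum> n\<^sup>-\<^sup>s\<^sup>t\<close>, which vanishes as soon as
  \<open>st > 1\<close>; hence \<open>dim\<^sub>H \<mu> \<le> dim\<^sub>H E \<le> 1/s\<close>.\<close>

lemma diameter_ball_le:
  fixes c :: "'a::metric_space"
  assumes "0 \<le> r"
  shows "diameter (ball c r) \<le> 2 * r"
proof (cases "ball c r = {}")
  case False
  have "dist x y \<le> 2 * r" if "x \<in> ball c r" "y \<in> ball c r" for x y
    using that dist_triangle[of x y c] by (auto simp: dist_commute)
  then show ?thesis
    using False unfolding diameter_def by (auto intro!: cSUP_least)
qed (use assms in simp)

lemma LIMSEQ_zero_if_summable_powr:
  fixes r :: "nat \<Rightarrow> real"
  assumes "t > 0" and "\<And>n. 0 \<le> r n" and "summable (\<lambda>n. r n powr t)"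
  shows "r \<longlonglongrightarrow> 0"
proof -
  have "(\<lambda>n. r n powr t) \<longlonglongrightarrow> 0"
    using assms(3) by (rule summable_LIMSEQ_zero)
  then have "(\<lambda>n. (r n powr t) powr (1 / t)) \<longlonglongrightarrow> 0"
    using assms(1) by (intro tendsto_zero_powrI[of _ _ "\<lambda>_. 1 / t" "1 / t"]) auto
  moreover have "(\<lambda>n. (r n powr t) powr (1 / t)) = r"
    using assms(1,2) by (simp add: powr_powr)
  ultimately show ?thesis
    by simp
qed

lemma hausdorff_approx_le_tail_balls:
  fixes f :: "nat \<Rightarrow> 'a::metric_space"
  assumes t: "t > 0" and r_nonneg: "\<And>n. 0 \<le> r n" and r_small: "\<And>n. n \<ge> N \<Longrightarrow> 2 * r n \<le> \<delta>"
    and E: "E \<subseteq> (\<Union>n\<in>{N..}. ball (f n) (r n))"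
  shows "hausdorff_approx t \<delta> E \<le> (\<Sum>i. ennreal ((2 * r (i + N)) powr t))"
proof -
  define U where "U i = ball (f (i + N)) (r (i + N))" for i
  have diam_U: "diameter (U i) \<le> 2 * r (i + N)" for i
    unfolding U_def by (rule diameter_ball_le[OF r_nonneg])
  have "E \<subseteq> (\<Union>i. U i)"
  proof
    fix y
    assume "y \<in> E"
    then obtain n where "n \<ge> N" "y \<in> ball (f n) (r n)"
      using E by auto
    then show "y \<in> (\<Union>i. U i)"
      unfolding U_def by (intro UN_I[of "n - N"]) auto
  qed
  moreover have "bounded (U i) \<and> diameter (U i) \<le> \<delta>" for i
    using diam_U[of i] r_small[of "i + N"] by (auto simp: U_def)
  ultimately have "hausdorff_approx t \<delta> E \<le> (\<Sum>i. ennreal (diameter (U i) powr t))"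
    unfolding hausdorff_approx_def by (intro INF_lower) auto
  also have "\<dots> \<le> (\<Sum>i. ennreal ((2 * r (i + N)) powr t))"
    using diam_U t by (intro suminf_le ennreal_leI powr_mono2) (auto simp: U_def diameter_ge_0)
  finally show ?thesis .
qed

lemma hausdorff_approx_limsup_balls_eq_0:
  fixes f :: "nat \<Rightarrow> 'a::metric_space"
  assumes t: "t > 0" and r_nonneg: "\<And>n. 0 \<le> r n" and summable: "summable (\<lambda>n. r n powr t)"
    and \<delta>: "\<delta> > 0"
    and E: "\<And>N. E \<subseteq> (\<Union>n\<in>{N..}. ball (f n) (r n))"
  shows "hausdorff_approx t \<delta> E = 0"
proof (rule antisym[OF ennreal_le_epsilon])
  fix e :: real
  assume "0 < e"
  define g where "g = (\<lambda>n. (2 * r n) powr t)"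
  have "g = (\<lambda>n. 2 powr t * r n powr t)"
    using r_nonneg by (auto simp: g_def powr_mult)
  then have g_summable: "summable g"
    using summable by (simp add: summable_mult)
  obtain N0 where N0: "\<And>n. n \<ge> N0 \<Longrightarrow> norm (\<Sum>i. g (i + n)) < e"
    using suminf_exist_split[OF \<open>0 < e\<close> g_summable] by blast
  have "r \<longlonglongrightarrow> 0"
    using t r_nonneg summable by (rule LIMSEQ_zero_if_summable_powr)
  then obtain N1 where N1: "\<And>n. n \<ge> N1 \<Longrightarrow> r n < \<delta> / 2"
    using order_tendstoD(2)[of r 0 sequentially "\<delta> / 2"] \<delta>
    by (auto simp: eventually_sequentially)
  define N where "N = max N0 N1"
  have "hausdorff_approx t \<delta> E \<le> (\<Sum>i. ennreal (g (i + N)))"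
    unfolding g_def
  proof (rule hausdorff_approx_le_tail_balls[OF t r_nonneg _ E])
    show "2 * r n \<le> \<delta>" if "n \<ge> N" for n
      using N1[of n] that by (simp add: N_def)
  qed
  also have "\<dots> = ennreal (\<Sum>i. g (i + N))"
    using summable_ignore_initial_segment[OF g_summable, of N]
    by (intro suminf_ennreal2) (auto simp: g_def)
  also have "\<dots> \<le> 0 + ennreal e"
    using N0[of N] by (auto simp: N_def intro!: ennreal_leI)
  finally show "hausdorff_approx t \<delta> E \<le> 0 + ennreal e" .
qed simp

lemma hausdorff_dim_le_if_hausdorff_approx_eq_0:
  assumes "t > 0" and "\<And>\<delta>. \<delta> > 0 \<Longrightarrow> hausdorff_approx t \<delta> E = 0"
  shows "hausdorff_dim E \<le> ereal t"
proof -
  have "hausdorff_measure t E = 0"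
    using assms(2) unfolding hausdorff_measure_def by simp
  then show ?thesis
    unfolding hausdorff_dim_def using assms(1) by (intro INF_lower) auto
qed

lemma hausdorff_dim_limsup_balls_le:
  fixes f :: "nat \<Rightarrow> 'a::metric_space"
  assumes s: "s > 0"
    and E: "\<And>N. E \<subseteq> (\<Union>n\<in>{N..}. ball (f n) (real n powr - s))"
  shows "hausdorff_dim E \<le> ereal (1 / s)"
proof (rule ereal_le_epsilon2)
  fix e :: real
  assume e: "0 < e"
  define t where "t = 1 / s + e"
  have t: "t > 0"
    using s e by (simp add: t_def add_pos_pos)
  have "s * t = 1 + e * s"
    using s by (simp add: t_def field_simps)
  with s e have "s * t > 1"
    by simp
  then have "summable (\<lambda>n. (real n powr - s) powr t)"
    by (simp add: powr_powr summable_real_powr_iff)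
  then have "hausdorff_dim E \<le> ereal t"
    using t E by (intro hausdorff_dim_le_if_hausdorff_approx_eq_0 hausdorff_approx_limsup_balls_eq_0[where f = f]) auto
  then show "hausdorff_dim E \<le> ereal (1 / s) + ereal e"
    by (simp add: t_def)
qed

lemma hausdorff_dim_nonneg: "0 \<le> hausdorff_dim E"
  unfolding hausdorff_dim_def by (intro INF_greatest) auto

lemma measure_hausdorff_dim_nonneg: "0 \<le> measure_hausdorff_dim M"
  unfolding measure_hausdorff_dim_def by (intro INF_greatest hausdorff_dim_nonneg)

lemma frequently_dist_less_powr_if_liminf_eq_0:
  assumes "liminf (\<lambda>n. ereal (real n powr s * dist (f n) y)) = 0"
  shows "\<exists>\<^sub>F n in sequentially. dist (f n) y < real n powr - s"
proof (rule ccontr)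
  assume "\<not> ?thesis"
  then have "\<forall>\<^sub>F n in sequentially. real n powr - s \<le> dist (f n) y"
    by (simp add: not_frequently not_less)
  then have "\<forall>\<^sub>F n in sequentially. (1::ereal) \<le> ereal (real n powr s * dist (f n) y)"
    using eventually_gt_at_top[of 0]
  proof eventually_elim
    case (elim n)
    then have "1 = real n powr s * real n powr - s"
      by (simp add: powr_minus)
    also have "\<dots> \<le> real n powr s * dist (f n) y"
      using elim by (intro mult_left_mono) auto
    finally show ?case
      by simp
  qed
  then have "1 \<le> liminf (\<lambda>n. ereal (real n powr s * dist (f n) y))"
    by (rule Liminf_bounded)
  with assms show False
    by simp
qed

lemma measure_hausdorff_dim_le_if_AE_liminf_eq_0:
  fixes M :: "'a::metric_space measure" and f :: "nat \<Rightarrow> 'a"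
  assumes borel_M: "sets M = sets borel" and prob: "prob_space M" and s: "s > 0"
    and AE: "AE y in M. liminf (\<lambda>n. ereal (real n powr s * dist (f n) y)) = 0"
  shows "measure_hausdorff_dim M \<le> ereal (1 / s)"
proof -
  interpret prob_space M by (rule prob)
  define E where "E = (\<Inter>N. \<Union>n\<in>{N..}. ball (f n) (real n powr - s))"
  have E_borel: "E \<in> sets borel"
    unfolding E_def by (intro sets.countable_INT' borel_open open_UN) auto
  have "AE y in M. y \<in> E"
    using AE
  proof eventually_elim
    case (elim y)
    then show ?case
      using frequently_dist_less_powr_if_liminf_eq_0[OF elim]
      by (auto simp: E_def frequently_sequentially dist_commute)
  qed
  then have "emeasure M E = emeasure M (space M)"
    using E_borel borel_M sets_eq_imp_space_eq[OF borel_M]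
    by (intro emeasure_eq_AE) auto
  then have "emeasure M E = 1"
    by (simp add: emeasure_space_1)
  then have "measure_hausdorff_dim M \<le> hausdorff_dim E"
    unfolding measure_hausdorff_dim_def using E_borel by (intro INF_lower) auto
  also have "\<dots> \<le> ereal (1 / s)"
    using s by (intro hausdorff_dim_limsup_balls_le) (auto simp: E_def)
  finally show ?thesis .
qed

lemma AE_pair_obtain_fst:
  assumes "sigma_finite_measure M" and "sigma_finite_measure N" and "emeasure M (space M) \<noteq> 0"
    and "AE z in M \<Otimes>\<^sub>M N. P (fst z) (snd z)"
  obtains x where "AE y in N. P x y"
proof -
  interpret pair_sigma_finite M N
    using assms(1,2) by (rule pair_sigma_finite.intro)
  have "AE x in M. AE y in N. P x y"
    using AE_pair[OF assms(4)] by simp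
  moreover have "ae_filter M \<noteq> bot"
    using assms(3) by (simp add: ae_filter_eq_bot_iff)
  ultimately show ?thesis
    using eventually_happens that by blast
qed

lemma ereal_le_inverse_if_le_inverse:
  assumes "s > 0" and "0 \<le> \<alpha>" and "\<alpha> \<le> ereal (1 / s)"
  shows "ereal s \<le> (if \<alpha> = 0 then \<infinity> else 1 / \<alpha>)"
proof (cases \<alpha>)
  case (real a)
  show ?thesis
  proof (cases "a = 0")
    case False
    with assms real have "0 < a" "s \<le> 1 / a"
      by (auto simp: field_simps)
    moreover have "1 / ereal a = ereal (1 / a)"
      using False by (metis ereal_divide one_ereal_def)
    ultimately show ?thesis
      using real by simp
  qed (use real in simp)
qed (use assms in auto)

theorem proposition6p10:
  fixes M :: "'a::metric_space measure" and T :: "'a \<Rightarrow> 'a" and \<alpha> :: ereal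
  assumes separable: "\<exists>D :: 'a set. countable D \<and> closure D = UNIV"
    and borel_M: "sets M = sets borel"
    and prob: "prob_space M"
    and T_meas: "T \<in> borel_measurable borel"
    and invariant: "distr M M T = M"
    and dim: "\<alpha> = measure_hausdorff_dim M"
  shows "C_phi M T \<le> (if \<alpha> = 0 then \<infinity> else 1 / \<alpha>)"
proof -
  interpret prob_space M by (rule prob)
  have \<sigma>: "sigma_finite_measure M"
    by (rule prob_space_imp_sigma_finite[OF prob])
  have nontrivial: "emeasure M (space M) \<noteq> 0"
    by (simp add: emeasure_space_1)
  have \<alpha>_nonneg: "0 \<le> \<alpha>"
    using dim measure_hausdorff_dim_nonneg by simp
  have "ereal s \<le> (if \<alpha> = 0 then \<infinity> else 1 / \<alpha>)"
    if s: "s > 0" and AE: "AE z in M \<Otimes>\<^sub>M M.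
      liminf (\<lambda>n. ereal (real n powr s * dist ((T ^^ n) (fst z)) (snd z))) = 0" for s
  proof -
    obtain x where "AE y in M. liminf (\<lambda>n. ereal (real n powr s * dist ((T ^^ n) x) y)) = 0"
      using AE_pair_obtain_fst[OF \<sigma> \<sigma> nontrivial,
          where P = "\<lambda>x y. liminf (\<lambda>n. ereal (real n powr s * dist ((T ^^ n) x) y)) = 0"] AE
      by blast
    then have "\<alpha> \<le> ereal (1 / s)"
      unfolding dim by (rule measure_hausdorff_dim_le_if_AE_liminf_eq_0[OF borel_M prob s])
    then show ?thesis
      by (rule ereal_le_inverse_if_le_inverse[OF s \<alpha>_nonneg])
  qed
  moreover have "0 \<le> (if \<alpha> = 0 then \<infinity> else 1 / \<alpha>)"
    using \<alpha>_nonneg by (cases \<alpha>) auto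
  ultimately show ?thesis
    unfolding C_phi_def by (auto intro!: Sup_least)
qed

end
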